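(* (Provably in $\mathsf{Z}^-_{\mathrm{FTM}\omega}$.) Let $E$ be a strict well-ordering of a set $U$. Then there is an ordinal $\lambda$ and an order isomorphism of $\langle U,E\rangle$ onto $\langle\lambda,\in\rangle$.
   Context: $\mathsf{Z}^-_{\mathrm{FTM}\omega}$ is Zermelo set theory without Power Set and Choice (Extensionality, Pairing, Union, Infinity, Regularity, Separation) plus: (FC) every set $X$ has a superset $Y$ such that every finite $x\subseteq Y$ belongs to $Y$; (TS) every set has a transitive superset; (MC) every set binary relation $A$ that is well-founded and extensional admits a transitive set $X$ and a bijection $\eta$ from its field onto $X$ with $jAk\iff\eta(j)\in\eta(k)$; (Count) every set admits an injection into $\omega$. *)

theory Defs
  imports Main
begin

text \<open>
  A first-order structure for the language of set theory is a type 'v together with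
  a binary relation el, where el x y means x is an element of y.
\<close>

datatype fm = FMem nat nat | FEq nat nat | FNeg fm | FConj fm fm | FEx nat fm

primrec sat :: "('v \<Rightarrow> 'v \<Rightarrow> bool) \<Rightarrow> (nat \<Rightarrow> 'v) \<Rightarrow> fm \<Rightarrow> bool" where
  "sat el env (FMem i j) = el (env i) (env j)"
| "sat el env (FEq i j) = (env i = env j)"
| "sat el env (FNeg p) = (\<not> sat el env p)"
| "sat el env (FConj p q) = (sat el env p \<and> sat el env q)"
| "sat el env (FEx i p) = (\<exists>z. sat el (env(i := z)) p)"

definition subset_m :: "('v \<Rightarrow> 'v \<Rightarrow> bool) \<Rightarrow> 'v \<Rightarrow> 'v \<Rightarrow> bool" where
  "subset_m el x y \<longleftrightarrow> (\<forall>z. el z x \<longrightarrow> el z y)"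

definition empty_m :: "('v \<Rightarrow> 'v \<Rightarrow> bool) \<Rightarrow> 'v \<Rightarrow> bool" where
  "empty_m el e \<longleftrightarrow> (\<forall>z. \<not> el z e)"

definition nonempty_m :: "('v \<Rightarrow> 'v \<Rightarrow> bool) \<Rightarrow> 'v \<Rightarrow> bool" where
  "nonempty_m el x \<longleftrightarrow> (\<exists>z. el z x)"

definition upair_m :: "('v \<Rightarrow> 'v \<Rightarrow> bool) \<Rightarrow> 'v \<Rightarrow> 'v \<Rightarrow> 'v \<Rightarrow> bool" where
  "upair_m el p a b \<longleftrightarrow> (\<forall>z. el z p \<longleftrightarrow> z = a \<or> z = b)"

definition opair_m :: "('v \<Rightarrow> 'v \<Rightarrow> bool) \<Rightarrow> 'v \<Rightarrow> 'v \<Rightarrow> 'v \<Rightarrow> bool" where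
  "opair_m el p a b \<longleftrightarrow> (\<forall>z. el z p \<longleftrightarrow> upair_m el z a a \<or> upair_m el z a b)"

definition union_m :: "('v \<Rightarrow> 'v \<Rightarrow> bool) \<Rightarrow> 'v \<Rightarrow> 'v \<Rightarrow> bool" where
  "union_m el u x \<longleftrightarrow> (\<forall>z. el z u \<longleftrightarrow> (\<exists>y. el y x \<and> el z y))"

definition succ_m :: "('v \<Rightarrow> 'v \<Rightarrow> bool) \<Rightarrow> 'v \<Rightarrow> 'v \<Rightarrow> bool" where
  "succ_m el s x \<longleftrightarrow> (\<forall>z. el z s \<longleftrightarrow> el z x \<or> z = x)"

definition trans_m :: "('v \<Rightarrow> 'v \<Rightarrow> bool) \<Rightarrow> 'v \<Rightarrow> bool" where
  "trans_m el x \<longleftrightarrow> (\<forall>y z. el z y \<and> el y x \<longrightarrow> el z x)"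

definition relation_m :: "('v \<Rightarrow> 'v \<Rightarrow> bool) \<Rightarrow> 'v \<Rightarrow> bool" where
  "relation_m el R \<longleftrightarrow> (\<forall>p. el p R \<longrightarrow> (\<exists>a b. opair_m el p a b))"

definition rel_m :: "('v \<Rightarrow> 'v \<Rightarrow> bool) \<Rightarrow> 'v \<Rightarrow> 'v \<Rightarrow> 'v \<Rightarrow> bool" where
  "rel_m el R a b \<longleftrightarrow> (\<exists>p. el p R \<and> opair_m el p a b)"

definition in_field_m :: "('v \<Rightarrow> 'v \<Rightarrow> bool) \<Rightarrow> 'v \<Rightarrow> 'v \<Rightarrow> bool" where
  "in_field_m el R j \<longleftrightarrow> (\<exists>k. rel_m el R j k \<or> rel_m el R k j)"

definition fun_m :: "('v \<Rightarrow> 'v \<Rightarrow> bool) \<Rightarrow> 'v \<Rightarrow> ('v \<Rightarrow> bool) \<Rightarrow> ('v \<Rightarrow> bool) \<Rightarrow> bool" where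
  "fun_m el f D B \<longleftrightarrow> relation_m el f
     \<and> (\<forall>a b c. rel_m el f a b \<and> rel_m el f a c \<longrightarrow> b = c)
     \<and> (\<forall>a. (\<exists>b. rel_m el f a b) \<longleftrightarrow> D a)
     \<and> (\<forall>a b. rel_m el f a b \<longrightarrow> B b)"

definition inj_m :: "('v \<Rightarrow> 'v \<Rightarrow> bool) \<Rightarrow> 'v \<Rightarrow> ('v \<Rightarrow> bool) \<Rightarrow> ('v \<Rightarrow> bool) \<Rightarrow> bool" where
  "inj_m el f D B \<longleftrightarrow> fun_m el f D B
     \<and> (\<forall>a a' b. rel_m el f a b \<and> rel_m el f a' b \<longrightarrow> a = a')"

definition bij_m :: "('v \<Rightarrow> 'v \<Rightarrow> bool) \<Rightarrow> 'v \<Rightarrow> ('v \<Rightarrow> bool) \<Rightarrow> ('v \<Rightarrow> bool) \<Rightarrow> bool" where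
  "bij_m el f D B \<longleftrightarrow> inj_m el f D B \<and> (\<forall>b. B b \<longrightarrow> (\<exists>a. rel_m el f a b))"

definition strict_wo_m :: "('v \<Rightarrow> 'v \<Rightarrow> bool) \<Rightarrow> ('v \<Rightarrow> 'v \<Rightarrow> bool) \<Rightarrow> 'v \<Rightarrow> bool" where
  "strict_wo_m el r U \<longleftrightarrow>
     (\<forall>a. el a U \<longrightarrow> \<not> r a a)
   \<and> (\<forall>a b c. el a U \<and> el b U \<and> el c U \<and> r a b \<and> r b c \<longrightarrow> r a c)
   \<and> (\<forall>a b. el a U \<and> el b U \<longrightarrow> r a b \<or> a = b \<or> r b a)
   \<and> (\<forall>S. subset_m el S U \<and> nonempty_m el S \<longrightarrow> (\<exists>m. el m S \<and> (\<forall>y. el y S \<longrightarrow> \<not> r y m)))"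

definition strict_wellordering_m :: "('v \<Rightarrow> 'v \<Rightarrow> bool) \<Rightarrow> 'v \<Rightarrow> 'v \<Rightarrow> bool" where
  "strict_wellordering_m el U E \<longleftrightarrow>
     relation_m el E \<and> (\<forall>a b. rel_m el E a b \<longrightarrow> el a U \<and> el b U)
   \<and> strict_wo_m el (rel_m el E) U"

definition ordinal_m :: "('v \<Rightarrow> 'v \<Rightarrow> bool) \<Rightarrow> 'v \<Rightarrow> bool" where
  "ordinal_m el x \<longleftrightarrow> trans_m el x \<and> strict_wo_m el el x"

definition natnum_m :: "('v \<Rightarrow> 'v \<Rightarrow> bool) \<Rightarrow> 'v \<Rightarrow> bool" where
  "natnum_m el n \<longleftrightarrow> ordinal_m el n
     \<and> (\<forall>m. el m n \<or> m = n \<longrightarrow> empty_m el m \<or> (\<exists>k. succ_m el m k))"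

definition omega_m :: "('v \<Rightarrow> 'v \<Rightarrow> bool) \<Rightarrow> 'v \<Rightarrow> bool" where
  "omega_m el w \<longleftrightarrow> (\<forall>z. el z w \<longleftrightarrow> natnum_m el z)"

definition finite_m :: "('v \<Rightarrow> 'v \<Rightarrow> bool) \<Rightarrow> 'v \<Rightarrow> bool" where
  "finite_m el x \<longleftrightarrow> (\<exists>n f. natnum_m el n \<and> bij_m el f (\<lambda>a. el a x) (\<lambda>b. el b n))"

definition wf_m :: "('v \<Rightarrow> 'v \<Rightarrow> bool) \<Rightarrow> 'v \<Rightarrow> bool" where
  "wf_m el A \<longleftrightarrow> (\<forall>S. (\<forall>z. el z S \<longrightarrow> in_field_m el A z) \<and> nonempty_m el S
       \<longrightarrow> (\<exists>m. el m S \<and> (\<forall>y. el y S \<longrightarrow> \<not> rel_m el A y m)))"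

definition extensional_m :: "('v \<Rightarrow> 'v \<Rightarrow> bool) \<Rightarrow> 'v \<Rightarrow> bool" where
  "extensional_m el A \<longleftrightarrow> (\<forall>j k. in_field_m el A j \<and> in_field_m el A k
       \<and> (\<forall>i. rel_m el A i j \<longleftrightarrow> rel_m el A i k) \<longrightarrow> j = k)"

definition Zminus_FTMw :: "('v \<Rightarrow> 'v \<Rightarrow> bool) \<Rightarrow> bool" where
  "Zminus_FTMw el \<longleftrightarrow>
     \<comment> \<open>Extensionality\<close>
     (\<forall>x y. (\<forall>z. el z x \<longleftrightarrow> el z y) \<longrightarrow> x = y)
     \<comment> \<open>Pairing\<close>
   \<and> (\<forall>a b. \<exists>p. upair_m el p a b)
     \<comment> \<open>Union\<close>
   \<and> (\<forall>x. \<exists>u. union_m el u x)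
     \<comment> \<open>Infinity\<close>
   \<and> (\<exists>w. (\<exists>e. empty_m el e \<and> el e w) \<and> (\<forall>x. el x w \<longrightarrow> (\<exists>s. succ_m el s x \<and> el s w)))
     \<comment> \<open>Regularity\<close>
   \<and> (\<forall>x. nonempty_m el x \<longrightarrow> (\<exists>y. el y x \<and> (\<forall>z. el z y \<longrightarrow> \<not> el z x)))
     \<comment> \<open>Separation schema (variable 0 is the separated variable, others are parameters)\<close>
   \<and> (\<forall>\<phi> env x. \<exists>y. \<forall>z. el z y \<longleftrightarrow> el z x \<and> sat el (env(0 := z)) \<phi>)
     \<comment> \<open>(FC)\<close>
   \<and> (\<forall>X. \<exists>Y. subset_m el X Y \<and> (\<forall>x. finite_m el x \<and> subset_m el x Y \<longrightarrow> el x Y))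
     \<comment> \<open>(TS)\<close>
   \<and> (\<forall>x. \<exists>t. subset_m el x t \<and> trans_m el t)
     \<comment> \<open>(MC)\<close>
   \<and> (\<forall>A. relation_m el A \<and> wf_m el A \<and> extensional_m el A \<longrightarrow>
        (\<exists>X \<eta>. trans_m el X \<and> bij_m el \<eta> (in_field_m el A) (\<lambda>x. el x X)
           \<and> (\<forall>j k x y. rel_m el \<eta> j x \<and> rel_m el \<eta> k y \<longrightarrow> (rel_m el A j k \<longleftrightarrow> el x y))))
     \<comment> \<open>(Count)\<close>
   \<and> (\<forall>x. \<exists>w f. omega_m el w \<and> inj_m el f (\<lambda>a. el a x) (\<lambda>b. el b w))"

definition order_iso_m :: "('v \<Rightarrow> 'v \<Rightarrow> bool) \<Rightarrow> 'v \<Rightarrow> 'v \<Rightarrow> 'v \<Rightarrow> 'v \<Rightarrow> bool" where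
  "order_iso_m el U E lam f \<longleftrightarrow> bij_m el f (\<lambda>a. el a U) (\<lambda>b. el b lam)
     \<and> (\<forall>a b x y. rel_m el f a x \<and> rel_m el f b y \<longrightarrow> (rel_m el E a b \<longleftrightarrow> el x y))"

end

theory Submission
  imports Defs
begin

text \<open>
  If U has two distinct elements, totality makes every element of U lie in the field of E,
  so E is a well-founded extensional set relation on U and (MC) collapses it onto a
  transitive set X with an isomorphism onto (X, \<in>). Irreflexivity, transitivity and totality
  of \<in> on X are inherited from E through the isomorphism, and least elements come from
  Regularity, so X is an ordinal. If U has at most one element the field of E is empty and
  (MC) gives nothing; then U is isomorphic to 0 or to 1 = {0} by the evident map.
\<close>

context
  fixes el :: "'v \<Rightarrow> 'v \<Rightarrow> bool"
begin

lemma opair_m_components_unique: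
  assumes pairing: "\<forall>a b. \<exists>p. upair_m el p a b"
    and ab: "opair_m el p a b" and cd: "opair_m el p c d"
  shows "a = c \<and> b = d"
proof -
  obtain s where s: "upair_m el s a a" using pairing by blast
  obtain t where t: "upair_m el t a b" using pairing by blast
  obtain t' where t': "upair_m el t' c d" using pairing by blast
  have "el s p" "el t p" "el t' p"
    using ab cd s t t' unfolding opair_m_def by blast+
  then have "a = c"
    and "upair_m el t c c \<or> upair_m el t c d"
    and "upair_m el t' a a \<or> upair_m el t' a b"
    using ab cd s unfolding opair_m_def upair_m_def by metis+
  then show ?thesis
    using t t' unfolding upair_m_def by metis
qed

lemma opair_m_exists:
  assumes extensionality: "\<forall>x y. (\<forall>z. el z x \<longleftrightarrow> el z y) \<longrightarrow> x = y"
    and pairing: "\<forall>a b. \<exists>p. upair_m el p a b"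
  shows "\<exists>q. opair_m el q a b"
proof -
  obtain s where s: "upair_m el s a a" using pairing by blast
  obtain t where t: "upair_m el t a b" using pairing by blast
  obtain q where q: "upair_m el q s t" using pairing by blast
  have upair_unique: "upair_m el z x y \<Longrightarrow> upair_m el z' x y \<Longrightarrow> z = z'" for z z' x y
    using extensionality unfolding upair_m_def by metis
  have "opair_m el q a b"
    unfolding opair_m_def
  proof (intro allI iffI)
    fix z assume "el z q"
    then have "z = s \<or> z = t" using q unfolding upair_m_def by blast
    then show "upair_m el z a a \<or> upair_m el z a b" using s t by blast
  next
    fix z assume "upair_m el z a a \<or> upair_m el z a b"
    then have "z = s \<or> z = t" using s t upair_unique by blast
    then show "el z q" using q unfolding upair_m_def by blast
  qed
  then show ?thesis by blast
qed

lemma strict_wo_mD: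
  assumes "strict_wo_m el r U"
  shows strict_wo_m_irrefl: "el a U \<Longrightarrow> \<not> r a a"
    and strict_wo_m_trans: "el a U \<Longrightarrow> el b U \<Longrightarrow> el c U \<Longrightarrow> r a b \<Longrightarrow> r b c \<Longrightarrow> r a c"
    and strict_wo_m_total: "el a U \<Longrightarrow> el b U \<Longrightarrow> r a b \<or> a = b \<or> r b a"
    and strict_wo_m_least: "subset_m el S U \<Longrightarrow> nonempty_m el S \<Longrightarrow>
      \<exists>m. el m S \<and> (\<forall>y. el y S \<longrightarrow> \<not> r y m)"
  using assms unfolding strict_wo_m_def by blast+

lemma strict_wellordering_mD:
  assumes "strict_wellordering_m el U E"
  shows strict_wellordering_m_relation: "relation_m el E"
    and strict_wellordering_m_wo: "strict_wo_m el (rel_m el E) U"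
    and in_field_m_imp_mem: "in_field_m el E c \<Longrightarrow> el c U"
  using assms unfolding strict_wellordering_m_def in_field_m_def by blast+

lemma in_field_m_eq_mem:
  assumes wo: "strict_wellordering_m el U E"
    and a: "el a U" and b: "el b U" and "a \<noteq> b"
  shows "in_field_m el E = (\<lambda>c. el c U)"
proof
  fix c
  have "in_field_m el E c" if c: "el c U"
  proof (cases "c = a")
    case True
    then show ?thesis
      using strict_wo_m_total[OF strict_wellordering_m_wo[OF wo] c b] \<open>a \<noteq> b\<close>
      unfolding in_field_m_def by blast
  next
    case False
    then show ?thesis
      using strict_wo_m_total[OF strict_wellordering_m_wo[OF wo] c a]
      unfolding in_field_m_def by blast
  qed
  then show "in_field_m el E c = el c U"
    using in_field_m_imp_mem[OF wo] by blast
qed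

lemma wf_m_if_strict_wellordering:
  assumes wo: "strict_wellordering_m el U E"
  shows "wf_m el E"
  unfolding wf_m_def
proof (intro allI impI)
  fix S assume "(\<forall>z. el z S \<longrightarrow> in_field_m el E z) \<and> nonempty_m el S"
  then have "subset_m el S U" and "nonempty_m el S"
    using in_field_m_imp_mem[OF wo] unfolding subset_m_def by blast+
  then show "\<exists>m. el m S \<and> (\<forall>y. el y S \<longrightarrow> \<not> rel_m el E y m)"
    by (rule strict_wo_m_least[OF strict_wellordering_m_wo[OF wo]])
qed

lemma extensional_m_if_strict_wellordering:
  assumes wo: "strict_wellordering_m el U E"
  shows "extensional_m el E"
  unfolding extensional_m_def
proof (intro allI impI)
  fix j k
  assume jk: "in_field_m el E j \<and> in_field_m el E k \<and> (\<forall>i. rel_m el E i j \<longleftrightarrow> rel_m el E i k)"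
  then have j: "el j U" and k: "el k U"
    using in_field_m_imp_mem[OF wo] by blast+
  note E = strict_wellordering_m_wo[OF wo]
  show "j = k"
    using strict_wo_m_total[OF E j k] strict_wo_m_irrefl[OF E j] strict_wo_m_irrefl[OF E k] jk
    by blast
qed

lemma ordinal_m_if_isomorphic_to_wellorder:
  assumes regularity: "\<forall>x. nonempty_m el x \<longrightarrow> (\<exists>y. el y x \<and> (\<forall>z. el z y \<longrightarrow> \<not> el z x))"
    and wo: "strict_wo_m el r U"
    and trans: "trans_m el X"
    and bij: "bij_m el \<eta> (\<lambda>a. el a U) (\<lambda>x. el x X)"
    and iso: "\<forall>j k x y. rel_m el \<eta> j x \<and> rel_m el \<eta> k y \<longrightarrow> (r j k \<longleftrightarrow> el x y)"
  shows "ordinal_m el X"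
proof -
  have single_valued: "\<And>a b c. rel_m el \<eta> a b \<Longrightarrow> rel_m el \<eta> a c \<Longrightarrow> b = c"
    and preimage: "\<And>x. el x X \<Longrightarrow> \<exists>a. el a U \<and> rel_m el \<eta> a x"
    using bij unfolding bij_m_def inj_m_def fun_m_def by blast+
  have "strict_wo_m el el X"
    unfolding strict_wo_m_def
  proof (intro conjI allI impI)
    fix x assume "el x X"
    then obtain a where "el a U" "rel_m el \<eta> a x" using preimage by blast
    then show "\<not> el x x" using iso strict_wo_m_irrefl[OF wo] by blast
  next
    fix x y z assume xyz: "el x X \<and> el y X \<and> el z X \<and> el x y \<and> el y z"
    then obtain a b c where "el a U" "rel_m el \<eta> a x" "el b U" "rel_m el \<eta> b y"
      "el c U" "rel_m el \<eta> c z"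
      using preimage by meson
    then show "el x z" using iso xyz strict_wo_m_trans[OF wo] by meson
  next
    fix x y assume "el x X \<and> el y X"
    then obtain a b where "el a U" "rel_m el \<eta> a x" "el b U" "rel_m el \<eta> b y"
      using preimage by meson
    then show "el x y \<or> x = y \<or> el y x"
      using strict_wo_m_total[OF wo] iso single_valued by metis
  next
    fix S assume "subset_m el S X \<and> nonempty_m el S"
    then show "\<exists>m. el m S \<and> (\<forall>y. el y S \<longrightarrow> \<not> el y m)"
      using regularity by metis
  qed
  then show ?thesis using trans unfolding ordinal_m_def by blast
qed

lemma ordinal_m_empty:
  assumes "empty_m el e"
  shows "ordinal_m el e"
  using assms
  unfolding ordinal_m_def trans_m_def strict_wo_m_def subset_m_def nonempty_m_def empty_m_def
  by blast

lemma ordinal_m_one: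
  assumes e: "empty_m el e" and one: "upair_m el one e e"
  shows "ordinal_m el one"
proof -
  have one_mem: "el z one \<longleftrightarrow> z = e" for z
    using one unfolding upair_m_def by blast
  have "\<not> el z e" for z
    using e unfolding empty_m_def by blast
  then show ?thesis
    unfolding ordinal_m_def trans_m_def strict_wo_m_def subset_m_def nonempty_m_def one_mem
    by blast
qed

lemma order_iso_m_empty:
  assumes "\<forall>a. \<not> el a U" and "empty_m el e"
  shows "order_iso_m el U E e e"
  using assms
  unfolding order_iso_m_def bij_m_def inj_m_def fun_m_def relation_m_def rel_m_def empty_m_def
  by simp

lemma order_iso_m_singleton:
  assumes extensionality: "\<forall>x y. (\<forall>z. el z x \<longleftrightarrow> el z y) \<longrightarrow> x = y"
    and pairing: "\<forall>a b. \<exists>p. upair_m el p a b"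
    and U: "\<forall>b. el b U \<longleftrightarrow> b = a" and irrefl: "\<not> rel_m el E a a"
    and e: "empty_m el e" and one: "upair_m el one e e"
  shows "\<exists>f. order_iso_m el U E one f"
proof -
  obtain q where q: "opair_m el q a e"
    using opair_m_exists[OF extensionality pairing] by blast
  obtain f where f: "upair_m el f q q" using pairing by blast
  have f_mem: "el p f \<longleftrightarrow> p = q" for p
    using f unfolding upair_m_def by blast
  then have rel_f: "rel_m el f x y \<longleftrightarrow> x = a \<and> y = e" for x y
    using q opair_m_components_unique[OF pairing] unfolding rel_m_def by metis
  have "relation_m el f"
    unfolding relation_m_def f_mem using q by blast
  moreover have "el z one \<longleftrightarrow> z = e" for z
    using one unfolding upair_m_def by blast
  ultimately have "order_iso_m el U E one f"
    using U irrefl e unfolding order_iso_m_def bij_m_def inj_m_def fun_m_def rel_f empty_m_def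
    by auto
  then show ?thesis by blast
qed

lemma order_iso_m_collapse:
  assumes regularity: "\<forall>x. nonempty_m el x \<longrightarrow> (\<exists>y. el y x \<and> (\<forall>z. el z y \<longrightarrow> \<not> el z x))"
    and collapse: "\<forall>A. relation_m el A \<and> wf_m el A \<and> extensional_m el A \<longrightarrow>
        (\<exists>X \<eta>. trans_m el X \<and> bij_m el \<eta> (in_field_m el A) (\<lambda>x. el x X)
           \<and> (\<forall>j k x y. rel_m el \<eta> j x \<and> rel_m el \<eta> k y \<longrightarrow> (rel_m el A j k \<longleftrightarrow> el x y)))"
    and wo: "strict_wellordering_m el U E"
    and two: "el a U" "el b U" "a \<noteq> b"
  shows "\<exists>lam f. ordinal_m el lam \<and> order_iso_m el U E lam f"
proof -
  have field: "in_field_m el E = (\<lambda>c. el c U)"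
    using in_field_m_eq_mem[OF wo two] .
  obtain X \<eta> where X: "trans_m el X" and bij_field: "bij_m el \<eta> (in_field_m el E) (\<lambda>x. el x X)"
    and iso: "\<forall>j k x y. rel_m el \<eta> j x \<and> rel_m el \<eta> k y \<longrightarrow> (rel_m el E j k \<longleftrightarrow> el x y)"
    using collapse strict_wellordering_m_relation[OF wo] wf_m_if_strict_wellordering[OF wo]
      extensional_m_if_strict_wellordering[OF wo]
    by blast
  have bij: "bij_m el \<eta> (\<lambda>a. el a U) (\<lambda>x. el x X)"
    using bij_field unfolding field .
  have "ordinal_m el X"
    by (rule ordinal_m_if_isomorphic_to_wellorder[OF regularity strict_wellordering_m_wo[OF wo]
          X bij iso])
  moreover have "order_iso_m el U E X \<eta>"
    using bij iso unfolding order_iso_m_def by blast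
  ultimately show ?thesis by blast
qed

end

theorem lemma9p3:
  fixes el :: "'v \<Rightarrow> 'v \<Rightarrow> bool"
  assumes "Zminus_FTMw el"
  shows "\<forall>U E. strict_wellordering_m el U E \<longrightarrow>
           (\<exists>lam f. ordinal_m el lam \<and> order_iso_m el U E lam f)"
proof (intro allI impI)
  fix U E assume wo: "strict_wellordering_m el U E"
  have extensionality: "\<forall>x y. (\<forall>z. el z x \<longleftrightarrow> el z y) \<longrightarrow> x = y"
    and pairing: "\<forall>a b. \<exists>p. upair_m el p a b"
    and regularity: "\<forall>x. nonempty_m el x \<longrightarrow> (\<exists>y. el y x \<and> (\<forall>z. el z y \<longrightarrow> \<not> el z x))"
    and collapse: "\<forall>A. relation_m el A \<and> wf_m el A \<and> extensional_m el A \<longrightarrow>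
        (\<exists>X \<eta>. trans_m el X \<and> bij_m el \<eta> (in_field_m el A) (\<lambda>x. el x X)
           \<and> (\<forall>j k x y. rel_m el \<eta> j x \<and> rel_m el \<eta> k y \<longrightarrow> (rel_m el A j k \<longleftrightarrow> el x y)))"
    and infinity: "\<exists>w. (\<exists>e. empty_m el e \<and> el e w) \<and> (\<forall>x. el x w \<longrightarrow> (\<exists>s. succ_m el s x \<and> el s w))"
    using assms unfolding Zminus_FTMw_def by (auto simp only:)
  obtain e where e: "empty_m el e"
    using infinity by blast
  consider (two) a b where "el a U" "el b U" "a \<noteq> b"
    | (one) a where "\<forall>b. el b U \<longleftrightarrow> b = a"
    | (none) "\<forall>a. \<not> el a U"
    by blast
  then show "\<exists>lam f. ordinal_m el lam \<and> order_iso_m el U E lam f"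
  proof cases
    case two
    then show ?thesis by (rule order_iso_m_collapse[OF regularity collapse wo])
  next
    case one
    obtain lam where "upair_m el lam e e" using pairing by blast
    moreover have "\<not> rel_m el E a a"
      using strict_wo_m_irrefl[OF strict_wellordering_m_wo[OF wo]] one by blast
    ultimately show ?thesis
      using ordinal_m_one[OF e] order_iso_m_singleton[OF extensionality pairing one _ e] by blast
  next
    case none
    then show ?thesis using ordinal_m_empty[OF e] order_iso_m_empty[OF _ e] by blast
  qed
qed

end
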